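(* Let $k\ge 2$ be an integer and let $H=(V,\mathcal E)$ be a finite hypergraph that is hereditarily $k$-colorable. Set $\lambda := \frac{k}{k-1}$. Let $\mathcal L=\{L_v\}_{v\in V}$ be a family of finite sets of positive integers such that $\sum_{v\in V}\lambda^{-|L_v|} < 1$. Then $H$ admits a unique-maximum coloring from $\mathcal L$, i.e., there is a unique-maximum coloring $C$ of $H$ with $C(v)\in L_v$ for every $v\in V$.
   Context: A hypergraph $H=(V,\mathcal E)$ has finite vertex set $V$ and a family $\mathcal E$ of nonempty subsets of $V$ (hyperedges). A coloring $C\colon V\to\mathbb Z_{>0}$ is proper if every hyperedge with at least two vertices is non-monochromatic. It is a unique-maximum coloring if for every $S\in\mathcal E$, the maximum color $\max_{v\in S}C(v)$ is attained by exactly one vertex of $S$. For $V'\subseteq V$, the induced sub-hypergraph is $H[V']=(V',\{S\cap V' : S\in\mathcal E\})$. $H$ is hereditarily $k$-colorable if for every $V'\subseteq V$, $H[V']$ admits a proper coloring with at most $k$ colors. Given a family $\mathcal L=\{L_v\}_{v\in V}$ of sets of positive integers, $H$ admits a (unique-maximum) coloring from $\mathcal L$ if there is such a coloring with $C(v)\in L_v$ for all $v$. *)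

theory Defs
  imports Complex_Main
begin

definition hypergraph :: "'a set \<Rightarrow> 'a set set \<Rightarrow> bool" where
  "hypergraph V E \<longleftrightarrow> finite V \<and> (\<forall>S\<in>E. S \<noteq> {} \<and> S \<subseteq> V)"

definition induced_edges :: "'a set set \<Rightarrow> 'a set \<Rightarrow> 'a set set" where
  "induced_edges E V' = {S \<inter> V' | S. S \<in> E}"

definition proper_coloring :: "'a set \<Rightarrow> 'a set set \<Rightarrow> ('a \<Rightarrow> nat) \<Rightarrow> bool" where
  "proper_coloring V E C \<longleftrightarrow> (\<forall>v\<in>V. C v > 0) \<and>
     (\<forall>S\<in>E. card S \<ge> 2 \<longrightarrow> (\<exists>u\<in>S. \<exists>w\<in>S. C u \<noteq> C w))"

definition k_colorable :: "nat \<Rightarrow> 'a set \<Rightarrow> 'a set set \<Rightarrow> bool" where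
  "k_colorable k V E \<longleftrightarrow> (\<exists>C. proper_coloring V E C \<and> card (C ` V) \<le> k)"

definition hereditarily_k_colorable :: "nat \<Rightarrow> 'a set \<Rightarrow> 'a set set \<Rightarrow> bool" where
  "hereditarily_k_colorable k V E \<longleftrightarrow>
     (\<forall>V'\<subseteq>V. k_colorable k V' (induced_edges E V'))"

definition unique_max_coloring :: "'a set \<Rightarrow> 'a set set \<Rightarrow> ('a \<Rightarrow> nat) \<Rightarrow> bool" where
  "unique_max_coloring V E C \<longleftrightarrow> (\<forall>v\<in>V. C v > 0) \<and>
     (\<forall>S\<in>E. \<exists>!v. v \<in> S \<and> C v = Max (C ` S))"

end

theory Submission
  imports Defs
begin

(* Proof idea (a weighted greedy argument, by induction on the number of vertices).
   Give a vertex with list L the weight lam^(-|L|), lam = k/(k-1); the total weight is < 1,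
   so every list is nonempty.  Let c be the smallest colour occurring in any list and U the
   set of vertices whose list contains c.  Properly colour H[U] with at most k colours and
   let X be the colour class of largest weight.  No edge has two vertices of V inside X,
   so we may give all of X the colour c.  Removing c from the lists of
   U - X multiplies their weights by lam, and since X carries at least a 1/k fraction of the
   weight of U, the remaining instance on V - X still has total weight < 1.  By induction it
   has a colouring with unique maxima using only colours > c, and adding X (coloured c)
   keeps every maximum unique. *)

definition weight :: "real \<Rightarrow> nat set \<Rightarrow> real" where
  "weight lam A = lam powr (- real (card A))"

lemma weight_pos: "lam > 0 \<Longrightarrow> weight lam A > 0"
  by (simp add: weight_def)

lemma weight_empty: "lam > 0 \<Longrightarrow> weight lam {} = 1"
  by (simp add: weight_def)

lemma weight_remove:
  assumes "lam > 0" "finite A" "c \<in> A"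
  shows "weight lam (A - {c}) = lam * weight lam A"
proof -
  have "card A \<ge> 1" using assms(2,3) by (auto simp: Suc_le_eq card_gt_0_iff)
  then have "- real (card (A - {c})) = 1 + (- real (card A))"
    using assms(2,3) by simp
  then have "weight lam (A - {c}) = lam powr 1 * lam powr (- real (card A))"
    unfolding weight_def by (simp only: powr_add)
  then show ?thesis
    using assms(1) by (simp add: weight_def)
qed

lemma heaviest_colour_class:
  fixes w :: "'a \<Rightarrow> real"
  assumes "finite U" "U \<noteq> {}" "card (D ` U) \<le> k" "\<forall>u\<in>U. 0 \<le> w u"
  shows "\<exists>j\<in>D ` U. sum w U \<le> real k * sum w {u\<in>U. D u = j}"
proof -
  define f where "f j = sum w {u\<in>U. D u = j}" for j
  have fin: "finite (D ` U)" "D ` U \<noteq> {}" using assms(1,2) by auto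
  obtain j where j: "j \<in> D ` U" "f j = Max (f ` D ` U)"
    using Max_in[of "f ` D ` U"] fin by (metis finite_imageI image_is_empty imageE)
  have "f j \<ge> 0" unfolding f_def using assms(4) by (auto intro: sum_nonneg)
  have "sum w U = (\<Sum>i\<in>D ` U. f i)"
    unfolding f_def using assms(1) by (rule sum.image_gen)
  also have "\<dots> \<le> real (card (D ` U)) * f j"
    by (rule sum_bounded_above) (use j fin in auto)
  also have "\<dots> \<le> real k * f j" using assms(3) \<open>f j \<ge> 0\<close> by (simp add: mult_right_mono)
  finally show ?thesis using j(1) by (auto simp: f_def)
qed

lemma reweighted_sum_le:
  fixes w w' :: "'a \<Rightarrow> real" and k :: real
  assumes "k > 1" "finite V" "X \<subseteq> U" "U \<subseteq> V"
    and heavy: "sum w U \<le> k * sum w X"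
    and "\<forall>v\<in>V - U. w' v = w v" "\<forall>v\<in>U - X. w' v = k / (k - 1) * w v"
  shows "sum w' (V - X) \<le> sum w V"
proof -
  have finU: "finite U" using assms(2,4) finite_subset by blast
  have splitU: "sum w U = sum w (U - X) + sum w X"
    using assms(3) finU by (metis add.commute sum.subset_diff)
  have "V - X = (V - U) \<union> (U - X)" "(V - U) \<inter> (U - X) = {}" using assms(3,4) by auto
  then have "sum w' (V - X) = sum w' (V - U) + sum w' (U - X)"
    using assms(2) finU by (simp add: sum.union_disjoint)
  also have "\<dots> = sum w (V - U) + k / (k - 1) * sum w (U - X)"
    using assms(6,7) by (simp add: sum_distrib_left)
  also have "k / (k - 1) * sum w (U - X) \<le> sum w U"
    using heavy splitU assms(1) by (simp add: field_simps)
  also have "sum w (V - U) + sum w U = sum w V"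
    using assms(2,4) by (metis sum.subset_diff)
  finally show ?thesis by simp
qed

text \<open>\<open>C\<close> has unique maxima on every edge of \<open>E\<close>, restricted to the vertices in \<open>V\<close>.
  This relative notion is what the induction on \<open>V\<close> carries along.\<close>
definition unique_max_on :: "'a set \<Rightarrow> 'a set set \<Rightarrow> ('a \<Rightarrow> nat) \<Rightarrow> bool" where
  "unique_max_on V E C \<longleftrightarrow>
     (\<forall>S\<in>E. S \<inter> V \<noteq> {} \<longrightarrow> (\<exists>!v. v \<in> S \<inter> V \<and> C v = Max (C ` (S \<inter> V))))"

lemma unique_max_on_cong:
  assumes "\<forall>v\<in>V. C v = C' v"
  shows "unique_max_on V E C \<longleftrightarrow> unique_max_on V E C'"
proof -
  have "C ` (S \<inter> V) = C' ` (S \<inter> V)" for S using assms by auto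
  then show ?thesis unfolding unique_max_on_def using assms by (metis IntD2)
qed

lemma colour_class_edge_small:
  assumes "proper_coloring U (induced_edges E U) D" "S \<in> E"
    and "S \<inter> U \<subseteq> {u\<in>U. D u = j}"
  shows "card (S \<inter> U) < 2"
proof (rule ccontr)
  assume "\<not> card (S \<inter> U) < 2"
  moreover have "S \<inter> U \<in> induced_edges E U" using assms(2) by (auto simp: induced_edges_def)
  ultimately obtain u u' where "u \<in> S \<inter> U" "u' \<in> S \<inter> U" "D u \<noteq> D u'"
    using assms(1) unfolding proper_coloring_def by (meson not_less)
  then show False using assms(3) by auto
qed

text \<open>Edges meeting \<open>V - X\<close> keep their maximum there; edges whose trace lies in \<open>X\<close> have at most
  one vertex in \<open>V\<close>.\<close>
lemma unique_max_on_extend: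
  fixes C :: "'a \<Rightarrow> nat"
  assumes "finite V" "X \<subseteq> V"
    and um: "unique_max_on (V - X) E C"
    and low: "\<forall>v\<in>X. C v = c" and high: "\<forall>v\<in>V - X. c < C v"
    and small: "\<forall>S\<in>E. S \<inter> V \<subseteq> X \<longrightarrow> card (S \<inter> V) < 2"
  shows "unique_max_on V E C"
  unfolding unique_max_on_def
proof (intro ballI impI)
  fix S assume S: "S \<in> E" "S \<inter> V \<noteq> {}"
  show "\<exists>!v. v \<in> S \<inter> V \<and> C v = Max (C ` (S \<inter> V))"
  proof (cases "S \<inter> (V - X) = {}")
    case True
    then have "card (S \<inter> V) < 2" using small S(1) by blast
    moreover have "card (S \<inter> V) \<noteq> 0" using S(2) assms(1) by simp
    ultimately have "card (S \<inter> V) = 1" by linarith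
    then obtain x where "S \<inter> V = {x}" by (rule card_1_singletonE)
    then show ?thesis by auto
  next
    case False
    define M where "M = Max (C ` (S \<inter> (V - X)))"
    obtain v1 where v1: "v1 \<in> S \<inter> (V - X)" "C v1 = M"
      and v1_unique: "\<And>v. v \<in> S \<inter> (V - X) \<Longrightarrow> C v = M \<Longrightarrow> v = v1"
      using um S(1) False unfolding unique_max_on_def M_def by metis
    have below_M: "C v \<le> M" if "v \<in> S \<inter> (V - X)" for v
      using that assms(1) by (simp add: M_def)
    have "c < M" using high v1 by auto
    then have X_below: "C v < M" if "v \<in> X" for v using low that by simp
    have below_M': "C v \<le> M" if "v \<in> S \<inter> V" for v
      using that below_M X_below[of v] by (cases "v \<in> X") auto
    have Max_eq: "Max (C ` (S \<inter> V)) = M"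
    proof (rule Max_eqI)
      show "finite (C ` (S \<inter> V))" using assms(1) by simp
      show "M \<in> C ` (S \<inter> V)" using v1 by (metis DiffD1 IntD1 IntD2 IntI image_eqI)
    qed (use below_M' in blast)
    show ?thesis
    proof (rule ex1I[of _ v1])
      show "v1 \<in> S \<inter> V \<and> C v1 = Max (C ` (S \<inter> V))" using v1 Max_eq by auto
    next
      fix v assume v: "v \<in> S \<inter> V \<and> C v = Max (C ` (S \<inter> V))"
      then have "v \<notin> X" using Max_eq X_below by fastforce
      then show "v = v1" using v Max_eq v1_unique by blast
    qed
  qed
qed

lemma smallest_colour:
  fixes L :: "'a \<Rightarrow> nat set"
  assumes "finite V" "V \<noteq> {}" "\<forall>v\<in>V. finite (L v) \<and> L v \<noteq> {}"
  shows "\<exists>c v0. v0 \<in> V \<and> c \<in> L v0 \<and> (\<forall>v\<in>V. \<forall>x\<in>L v. c \<le> x)"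
proof -
  define A where "A = (\<Union>v\<in>V. L v)"
  have "finite A" "A \<noteq> {}" using assms by (auto simp: A_def)
  then show ?thesis
    using Min_in[of A] Min_le[of A] unfolding A_def by blast
qed

lemma greedy_colour_class:
  fixes k :: nat and L :: "'a \<Rightarrow> nat set"
  defines "lam \<equiv> real k / (real k - 1)"
  assumes k2: "k \<ge> 2" and fin: "finite V" and "V \<noteq> {}"
    and col: "\<forall>V'\<subseteq>V. k_colorable k V' (induced_edges E V')"
    and lists: "\<forall>v\<in>V. finite (L v)"
    and total: "(\<Sum>v\<in>V. weight lam (L v)) < 1"
  shows "\<exists>c X. X \<subseteq> V \<and> X \<noteq> {} \<and> (\<forall>v\<in>X. c \<in> L v) \<and> (\<forall>v\<in>V. \<forall>x\<in>L v. c \<le> x)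
    \<and> (\<forall>S\<in>E. S \<inter> V \<subseteq> X \<longrightarrow> card (S \<inter> V) < 2)
    \<and> (\<Sum>v\<in>V - X. weight lam (L v - {c})) < 1"
proof -
  have lam_pos: "lam > 0" using k2 by (simp add: lam_def)
  have lists_nonempty: "L v \<noteq> {}" if "v \<in> V" for v
  proof
    assume "L v = {}"
    then have "1 \<le> (\<Sum>v\<in>V. weight lam (L v))"
      using that fin member_le_sum[of v V "\<lambda>v. weight lam (L v)"]
      by (simp add: weight_empty weight_pos lam_pos less_imp_le)
    then show False using total by simp
  qed
  obtain c v0 where v0: "v0 \<in> V" "c \<in> L v0" and c_min: "\<forall>v\<in>V. \<forall>x\<in>L v. c \<le> x"
    using smallest_colour[of V L] fin lists \<open>V \<noteq> {}\<close> lists_nonempty by blast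
  define U where "U = {v\<in>V. c \<in> L v}"
  have U: "U \<subseteq> V" "U \<noteq> {}" "finite U" using v0 fin by (auto simp: U_def)
  obtain D where D: "proper_coloring U (induced_edges E U) D" "card (D ` U) \<le> k"
    using col U(1) by (auto simp: k_colorable_def)
  obtain j where "j \<in> D ` U"
    and heavy: "(\<Sum>v\<in>U. weight lam (L v)) \<le> real k * (\<Sum>v\<in>{u\<in>U. D u = j}. weight lam (L v))"
    using heaviest_colour_class[of U D k "\<lambda>v. weight lam (L v)"] U D(2)
    by (auto simp: weight_pos lam_pos less_imp_le)
  define X where "X = {u\<in>U. D u = j}"
  have X: "X \<subseteq> U" "X \<noteq> {}" using \<open>j \<in> D ` U\<close> by (auto simp: X_def)
  have "(\<Sum>v\<in>V - X. weight lam (L v - {c})) \<le> (\<Sum>v\<in>V. weight lam (L v))"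
    using reweighted_sum_le[OF _ fin X(1) U(1) heavy[folded X_def]] k2 lists
      weight_remove[OF lam_pos]
    by (simp add: U_def lam_def)
  moreover have "card (S \<inter> V) < 2" if "S \<in> E" "S \<inter> V \<subseteq> X" for S
  proof -
    have "S \<inter> U = S \<inter> V" using that(2) X(1) U(1) by auto
    then show ?thesis using colour_class_edge_small[OF D(1) that(1)] that(2) by (simp add: X_def)
  qed
  ultimately show ?thesis
    using X U(1) c_min total by (intro exI[of _ c] exI[of _ X]) (auto simp: U_def)
qed

lemma list_unique_max_on:
  fixes k :: nat and L :: "'a \<Rightarrow> nat set"
  assumes k2: "k \<ge> 2"
  shows "finite V \<Longrightarrow> \<forall>V'\<subseteq>V. k_colorable k V' (induced_edges E V')
    \<Longrightarrow> \<forall>v\<in>V. finite (L v)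
    \<Longrightarrow> (\<Sum>v\<in>V. weight (real k / (real k - 1)) (L v)) < 1
    \<Longrightarrow> \<exists>C. (\<forall>v\<in>V. C v \<in> L v) \<and> unique_max_on V E C"
proof (induction "card V" arbitrary: V L rule: less_induct)
  case less
  show ?case
  proof (cases "V = {}")
    case True then show ?thesis by (simp add: unique_max_on_def)
  next
    case False
    obtain c X where X: "X \<subseteq> V" "X \<noteq> {}" and c_in: "\<forall>v\<in>X. c \<in> L v"
      and c_min: "\<forall>v\<in>V. \<forall>x\<in>L v. c \<le> x"
      and small: "\<forall>S\<in>E. S \<inter> V \<subseteq> X \<longrightarrow> card (S \<inter> V) < 2"
      and total': "(\<Sum>v\<in>V - X. weight (real k / (real k - 1)) (L v - {c})) < 1"
      using greedy_colour_class[OF k2 less.prems(1) False less.prems(2-4)] by (elim exE conjE)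
    have "card (V - X) < card V"
      using X less.prems(1) by (intro psubset_card_mono) auto
    moreover have "\<forall>V'\<subseteq>V - X. k_colorable k V' (induced_edges E V')"
      using less.prems(2) by blast
    ultimately obtain C' where C'_lists: "\<forall>v\<in>V - X. C' v \<in> L v - {c}"
      and C'_um: "unique_max_on (V - X) E C'"
      using less.hyps[of "V - X" "\<lambda>v. L v - {c}"] less.prems(1,3) total' by blast
    define C where "C v = (if v \<in> X then c else C' v)" for v
    have lists_C: "\<forall>v\<in>V. C v \<in> L v"
      using c_in C'_lists by (auto simp: C_def)
    have "c < C v" if "v \<in> V - X" for v
    proof -
      have "C v \<in> L v" "C v \<noteq> c" using C'_lists that by (auto simp: C_def)
      moreover have "c \<le> C v" using c_min that \<open>C v \<in> L v\<close> by blast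
      ultimately show ?thesis by simp
    qed
    moreover have "unique_max_on (V - X) E C"
      using C'_um unique_max_on_cong[of "V - X" C C'] by (simp add: C_def)
    moreover have "\<forall>v\<in>X. C v = c" by (simp add: C_def)
    ultimately have "unique_max_on V E C"
      using unique_max_on_extend[OF less.prems(1) X(1) _ _ _ small] by blast
    then show ?thesis using lists_C by blast
  qed
qed

theorem theorem2p4:
  fixes k :: nat and V :: "'a set" and E :: "'a set set" and L :: "'a \<Rightarrow> nat set"
  assumes "k \<ge> 2"
    and "hypergraph V E"
    and "hereditarily_k_colorable k V E"
    and "\<forall>v\<in>V. finite (L v) \<and> (\<forall>c\<in>L v. c > 0)"
    and "(\<Sum>v\<in>V. (real k / (real k - 1)) powr (- real (card (L v)))) < 1"
  shows "\<exists>C. unique_max_coloring V E C \<and> (\<forall>v\<in>V. C v \<in> L v)"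
proof -
  have fin: "finite V" and edges: "\<forall>S\<in>E. S \<noteq> {} \<and> S \<subseteq> V"
    using assms(2) by (auto simp: hypergraph_def)
  obtain C where C_lists: "\<forall>v\<in>V. C v \<in> L v" and C_um: "unique_max_on V E C"
    using list_unique_max_on[OF assms(1) fin, of E L] assms(3-5)
    by (auto simp: hereditarily_k_colorable_def weight_def)
  have "\<forall>S\<in>E. S \<inter> V = S" using edges by auto
  then have "unique_max_coloring V E C"
    using C_um C_lists assms(4) edges
    unfolding unique_max_on_def unique_max_coloring_def by auto
  then show ?thesis using C_lists by blast
qed

end
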